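(* Let $P\in\mathbb{N}_0^{n\times n}$ be an incidence matrix that is monomial (every row and every column has exactly one non-zero entry). If two of its entries are greater than $1$, then $P$ exclusively represents reducible morphisms.
   Context: Let $\Sigma=\{a_1,\dots,a_n\}$. A morphism $\varphi:\Sigma^+\to\Sigma^+$ (non-empty images) is Parikh-positive if every letter occurs in $\varphi(a_1)\cdots\varphi(a_n)$. Its incidence matrix is $P(\varphi)=(m_{i,j})$ with $m_{i,j}=|\varphi(a_j)|_{a_i}$. An automorphism is an injective morphism mapping each letter to a single letter; a morphism is reducible if it equals $\psi_2\circ\psi_1$ with neither $\psi_1,\psi_2$ an automorphism. An incidence matrix $P$ exclusively represents reducible morphisms if every Parikh-positive morphism $\varphi$ with $P(\varphi)=P$ is reducible. *)

theory Defs
  imports Main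
begin

text \<open>Alphabet: a finite type 'a (letters a_1..a_n). A morphism of the free semigroup
  is determined by the images of the letters; images must be non-empty words.\<close>

definition morphism :: "('a \<Rightarrow> 'a list) \<Rightarrow> bool" where
  "morphism f \<longleftrightarrow> (\<forall>a. f a \<noteq> [])"

definition morph_comp :: "('a \<Rightarrow> 'a list) \<Rightarrow> ('a \<Rightarrow> 'a list) \<Rightarrow> ('a \<Rightarrow> 'a list)" where
  "morph_comp psi2 psi1 = (\<lambda>a. concat (map psi2 (psi1 a)))"

text \<open>Every letter occurs in phi(a_1)...phi(a_n), i.e. in some image phi(a).\<close>
definition parikh_positive :: "('a \<Rightarrow> 'a list) \<Rightarrow> bool" where
  "parikh_positive f \<longleftrightarrow> (\<forall>b. \<exists>a. b \<in> set (f a))"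

definition incidence :: "('a \<Rightarrow> 'a list) \<Rightarrow> 'a \<Rightarrow> 'a \<Rightarrow> nat" where
  "incidence f = (\<lambda>i j. count_list (f j) i)"

definition automorphism :: "('a \<Rightarrow> 'a list) \<Rightarrow> bool" where
  "automorphism f \<longleftrightarrow> (\<forall>a. length (f a) = 1) \<and> inj (\<lambda>a. hd (f a))"

definition reducible :: "('a \<Rightarrow> 'a list) \<Rightarrow> bool" where
  "reducible f \<longleftrightarrow> (\<exists>psi1 psi2. morphism psi1 \<and> morphism psi2 \<and>
      f = morph_comp psi2 psi1 \<and> \<not> automorphism psi1 \<and> \<not> automorphism psi2)"

definition exclusively_reducible :: "('a \<Rightarrow> 'a \<Rightarrow> nat) \<Rightarrow> bool" where
  "exclusively_reducible P \<longleftrightarrow>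
     (\<forall>f. morphism f \<and> parikh_positive f \<and> incidence f = P \<longrightarrow> reducible f)"

definition monomial_matrix :: "('a \<Rightarrow> 'a \<Rightarrow> nat) \<Rightarrow> bool" where
  "monomial_matrix P \<longleftrightarrow> (\<forall>i. \<exists>!j. P i j \<noteq> 0) \<and> (\<forall>j. \<exists>!i. P i j \<noteq> 0)"

end

theory Submission
  imports Defs
begin

(* A monomial incidence matrix forces every image to be a power of a single letter,
   f(a) = c(a)^n(a). If two columns j, l with j \<noteq> l have exponents above 1, then f factors
   as psi2 \<circ> psi1, where psi1 fixes l and sends every other letter a to a^n(a), while psi2
   sends l to f(l) and every other letter a to c(a). Since psi1(j) and psi2(l) are longer
   than one letter, neither factor is an automorphism. *)

lemma replicate_hd_if_unique_letter:
  assumes "\<exists>!x. count_list xs x \<noteq> 0"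
  shows "xs = replicate (length xs) (hd xs)"
proof -
  from assms obtain x where "x \<in> set xs" and "\<And>y. y \<in> set xs \<Longrightarrow> y = x"
    by (metis count_list_0_iff)
  then have "\<forall>y\<in>set xs. y = hd xs"
    by (metis list.set_sel(1) empty_iff list.set(1))
  then show ?thesis
    by (metis replicate_length_same)
qed

lemma monomial_matrix_column_unique:
  assumes "monomial_matrix P" and "P i j \<noteq> 0" and "P k j \<noteq> 0"
  shows "i = k"
  using assms unfolding monomial_matrix_def by blast

lemma monomial_incidence_imp_letter_power:
  assumes "monomial_matrix (incidence f)"
  shows "f a = replicate (length (f a)) (hd (f a))"
proof (rule replicate_hd_if_unique_letter)
  show "\<exists>!x. count_list (f a) x \<noteq> 0"
    using assms unfolding monomial_matrix_def incidence_def by blast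
qed

lemma not_automorphism_if_long_image:
  assumes "length (\<psi> a) > 1"
  shows "\<not> automorphism \<psi>"
  using assms unfolding automorphism_def by auto

lemma reducible_if_letter_powers:
  assumes "morphism f"
    and letter_power: "\<And>a. f a = replicate (length (f a)) (hd (f a))"
    and "j \<noteq> l" and "length (f j) > 1" and "length (f l) > 1"
  shows "reducible f"
proof -
  define \<psi>\<^sub>1 where "\<psi>\<^sub>1 = (\<lambda>a. if a = l then [a] else replicate (length (f a)) a)"
  define \<psi>\<^sub>2 where "\<psi>\<^sub>2 = (\<lambda>a. if a = l then f l else [hd (f a)])"
  have nonempty: "f a \<noteq> []" for a
    using \<open>morphism f\<close> by (simp add: morphism_def)
  have "morphism \<psi>\<^sub>1" and "morphism \<psi>\<^sub>2"
    using nonempty by (simp_all add: \<psi>\<^sub>1_def \<psi>\<^sub>2_def morphism_def)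
  moreover have "\<not> automorphism \<psi>\<^sub>1"
    using \<open>j \<noteq> l\<close> \<open>length (f j) > 1\<close>
    by (intro not_automorphism_if_long_image[of _ j]) (simp add: \<psi>\<^sub>1_def)
  moreover have "\<not> automorphism \<psi>\<^sub>2"
    using \<open>length (f l) > 1\<close>
    by (intro not_automorphism_if_long_image[of _ l]) (simp add: \<psi>\<^sub>2_def)
  moreover have "f = morph_comp \<psi>\<^sub>2 \<psi>\<^sub>1"
  proof
    fix a
    have "morph_comp \<psi>\<^sub>2 \<psi>\<^sub>1 a = replicate (length (f a)) (hd (f a))" if "a \<noteq> l"
      using that by (simp add: morph_comp_def \<psi>\<^sub>1_def \<psi>\<^sub>2_def)
    then show "f a = morph_comp \<psi>\<^sub>2 \<psi>\<^sub>1 a"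
      by (cases "a = l") (simp_all add: morph_comp_def \<psi>\<^sub>1_def \<psi>\<^sub>2_def flip: letter_power)
  qed
  ultimately show ?thesis
    unfolding reducible_def by blast
qed

theorem proposition19:
  fixes P :: "'a::finite \<Rightarrow> 'a \<Rightarrow> nat"
  assumes "monomial_matrix P"
    and "(i, j) \<noteq> (k, l)" and "P i j > 1" and "P k l > 1"
  shows "exclusively_reducible P"
  unfolding exclusively_reducible_def
proof (intro allI impI)
  fix f :: "'a \<Rightarrow> 'a list"
  assume "morphism f \<and> parikh_positive f \<and> incidence f = P"
  then have "morphism f" and P: "P = incidence f"
    by simp_all
  have distinct_columns: "j \<noteq> l"
    using assms monomial_matrix_column_unique[of P i j k] by auto
  have long: "length (f j) > 1" "length (f l) > 1"
    using assms(3,4) count_le_length[of "f j" i] count_le_length[of "f l" k]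
    by (simp_all add: P incidence_def)
  have letter_power: "f a = replicate (length (f a)) (hd (f a))" for a
    using assms(1) unfolding P by (rule monomial_incidence_imp_letter_power)
  show "reducible f"
    using \<open>morphism f\<close> letter_power distinct_columns long by (rule reducible_if_letter_powers)
qed

end
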